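(* Let $(\rho_t)_{t\ge0}$ be a gradient flow solution of the Granular-Medium equation. For any $x,y\in\mathbb{T}^d$ and $t,h>0$, with $B=|\nabla V|_2+|\nabla W|_2$, \[D_\rho(x,y;t,h)\le\left(\frac{d(x,y)}{2\sqrt h}+\frac12\sqrt h\,B\right)^2.\]
   Context: $\mathbb{T}^d=\mathbb{R}^d/\mathbb{Z}^d$ with flat distance $d(x,y)$. $V,W\in C^{2,1}(\mathbb{T}^d)$; for a vector field $U$, $|U|_2=\sup_x|U(x)|$ (Euclidean norm). $W*\rho(x)=\int W(x-y)d\rho(y)$. The Granular-Medium equation is $\partial_t\rho_t=\Delta\rho_t+\nabla\cdot(\rho_t\nabla V+\rho_t\nabla W*\rho_t)$, and gradient flow solutions are Ambrosio–Gigli–Savaré gradient flows of $\mathcal{F}[\rho]=\int\rho\log\rho+\int Vd\rho+\int W*\rho\,d\rho$ in $(\mathcal{P}(\mathbb{T}^d),W_2)$. Lagrangian: $\mathcal{L}_\rho(p,x,t)=\frac14|p+\nabla V(x)+\nabla W*\rho_t(x)|^2$; cost $D_\rho(x,y;t,h)=\inf\{\int_t^{t+h}\mathcal{L}_\rho(\dot\gamma_s,\gamma_s,s)ds:\gamma\in AC_2([t,t+h];\mathbb{T}^d),\gamma_t=x,\gamma_{t+h}=y\}$. *)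

theory Defs
  imports "HOL-Probability.Probability"
begin

text \<open>Points of T^d are represented by points of R^d = real^'n (d = CARD('n));
  functions on T^d are Z^d-periodic functions on R^d; measures on T^d are Borel
  probability measures on R^d concentrated on the fundamental cube [0,1)^d.\<close>

definition int_vec :: "real^'n \<Rightarrow> bool" where
  "int_vec k \<longleftrightarrow> (\<forall>i. k $ i \<in> \<int>)"

definition periodic :: "(real^'n \<Rightarrow> 'a) \<Rightarrow> bool" where
  "periodic f \<longleftrightarrow> (\<forall>x k. int_vec k \<longrightarrow> f (x + k) = f x)"

definition unit_cube :: "(real^'n) set" where
  "unit_cube = {x. \<forall>i. 0 \<le> x $ i \<and> x $ i < 1}"

definition torus_dist :: "real^'n \<Rightarrow> real^'n \<Rightarrow> real" where
  "torus_dist x y = Inf ((\<lambda>k. norm (x - y - k)) ` {k. int_vec k})"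

definition C21 :: "(real^'n \<Rightarrow> real) \<Rightarrow> (real^'n \<Rightarrow> real^'n) \<Rightarrow> bool" where
  "C21 f gradf \<longleftrightarrow>
     (\<forall>x. (f has_derivative (\<lambda>v. gradf x \<bullet> v)) (at x)) \<and>
     (\<exists>H. (\<forall>x. (gradf has_derivative H x) (at x)) \<and>
          (\<exists>L. \<forall>x y. onorm (\<lambda>v. H x v - H y v) \<le> L * dist x y))"

definition sup_norm :: "(real^'n \<Rightarrow> real^'n) \<Rightarrow> real" where
  "sup_norm U = Sup (range (\<lambda>x. norm (U x)))"

definition prob_torus :: "(real^'n) measure set" where
  "prob_torus = {\<mu>. prob_space \<mu> \<and> sets \<mu> = sets borel \<and> emeasure \<mu> unit_cube = 1}"

definition couplings :: "(real^'n) measure \<Rightarrow> (real^'n) measure \<Rightarrow> ((real^'n) \<times> (real^'n)) measure set" where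
  "couplings \<mu> \<nu> = {\<pi>. prob_space \<pi> \<and> sets \<pi> = sets borel \<and>
                      distr \<pi> borel fst = \<mu> \<and> distr \<pi> borel snd = \<nu>}"

definition W2 :: "(real^'n) measure \<Rightarrow> (real^'n) measure \<Rightarrow> real" where
  "W2 \<mu> \<nu> = sqrt (Inf ((\<lambda>\<pi>. \<integral>z. (torus_dist (fst z) (snd z))\<^sup>2 \<partial>\<pi>) ` couplings \<mu> \<nu>))"

definition has_density :: "(real^'n) measure \<Rightarrow> (real^'n \<Rightarrow> real) \<Rightarrow> bool" where
  "has_density \<mu> f \<longleftrightarrow> f \<in> borel_measurable borel \<and> (\<forall>x. 0 \<le> f x) \<and>
                         \<mu> = density lborel (\<lambda>x. ennreal (f x))"

text \<open>Since \<rho> log \<rho> \<ge> -1/e and the cube has volume 1, we integrate the nonnegative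
  function \<rho> log \<rho> + 1/e over the cube and subtract 1/e.\<close>
definition entropy :: "(real^'n) measure \<Rightarrow> ereal" where
  "entropy \<mu> = (if \<exists>f. has_density \<mu> f then
      (let f = (SOME f. has_density \<mu> f) in
        enn2ereal (\<integral>\<^sup>+x. ennreal (f x * ln (f x) + exp (-1) * indicator unit_cube x) \<partial>lborel)
        - ereal (exp (-1)))
     else \<infinity>)"

definition free_energy :: "(real^'n \<Rightarrow> real) \<Rightarrow> (real^'n \<Rightarrow> real) \<Rightarrow> (real^'n) measure \<Rightarrow> ereal" where
  "free_energy V W \<mu> = entropy \<mu> +
     ereal ((\<integral>x. V x \<partial>\<mu>) + (\<integral>x. (\<integral>y. W (x - y) \<partial>\<mu>) \<partial>\<mu>))"

definition local_slope :: "((real^'n) measure \<Rightarrow> ereal) \<Rightarrow> (real^'n) measure \<Rightarrow> ereal" where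
  "local_slope F \<mu> = (if \<bar>F \<mu>\<bar> = \<infinity> then \<infinity> else
     (INF r\<in>{0<..}. SUP \<nu>\<in>{\<nu>\<in>prob_torus. 0 < W2 \<mu> \<nu> \<and> W2 \<mu> \<nu> < r}.
        max 0 ((F \<mu> - F \<nu>) / ereal (W2 \<mu> \<nu>))))"

definition loc_AC_curve :: "(real \<Rightarrow> (real^'n) measure) \<Rightarrow> bool" where
  "loc_AC_curve \<rho> \<longleftrightarrow>
     (\<exists>m::real \<Rightarrow> real. (\<forall>a b. 0 < a \<longrightarrow> m integrable_on {a..b}) \<and>
        (\<forall>s t. 0 < s \<longrightarrow> s \<le> t \<longrightarrow> W2 (\<rho> s) (\<rho> t) \<le> integral {s..t} m)) \<and>
     ((\<lambda>t. W2 (\<rho> t) (\<rho> 0)) \<longlongrightarrow> 0) (at_right 0)"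

definition metric_derivative :: "(real \<Rightarrow> (real^'n) measure) \<Rightarrow> real \<Rightarrow> real" where
  "metric_derivative \<rho> t = Lim (at t) (\<lambda>s. W2 (\<rho> s) (\<rho> t) / \<bar>s - t\<bar>)"

text \<open>Gradient flow in the sense of Ambrosio--Gigli--Savar\'e: a curve of maximal
  slope of F with respect to its local slope (AGS Def. 1.3.2) in (P(T^d), W2).\<close>
definition gradient_flow :: "((real^'n) measure \<Rightarrow> ereal) \<Rightarrow> (real \<Rightarrow> (real^'n) measure) \<Rightarrow> bool" where
  "gradient_flow F \<rho> \<longleftrightarrow>
     (\<forall>t\<ge>0. \<rho> t \<in> prob_torus) \<and> loc_AC_curve \<rho> \<and>
     (\<exists>\<phi>::real \<Rightarrow> real. (\<forall>s t. 0 < s \<longrightarrow> s \<le> t \<longrightarrow> \<phi> t \<le> \<phi> s) \<and>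
        (AE t in lborel. 0 < t \<longrightarrow> F (\<rho> t) = ereal (\<phi> t)) \<and>
        (AE t in lborel. 0 < t \<longrightarrow>
           (\<exists>D. (\<phi> has_real_derivative D) (at t) \<and>
                ereal D \<le> - ereal ((metric_derivative \<rho> t)\<^sup>2 / 2)
                          - local_slope F (\<rho> t) * local_slope F (\<rho> t) / 2)))"

definition granular_gradient_flow ::
  "(real^'n \<Rightarrow> real) \<Rightarrow> (real^'n \<Rightarrow> real) \<Rightarrow> (real \<Rightarrow> (real^'n) measure) \<Rightarrow> bool" where
  "granular_gradient_flow V W \<rho> \<longleftrightarrow> gradient_flow (free_energy V W) \<rho>"

definition conv_grad :: "(real^'n \<Rightarrow> real^'n) \<Rightarrow> (real^'n) measure \<Rightarrow> real^'n \<Rightarrow> real^'n" where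
  "conv_grad gW \<mu> x = (\<integral>y. gW (x - y) \<partial>\<mu>)"

definition lagrangian ::
  "(real^'n \<Rightarrow> real^'n) \<Rightarrow> (real^'n \<Rightarrow> real^'n) \<Rightarrow> (real \<Rightarrow> (real^'n) measure)
   \<Rightarrow> real^'n \<Rightarrow> real^'n \<Rightarrow> real \<Rightarrow> real" where
  "lagrangian gV gW \<rho> p x t = (1/4) * (norm (p + gV x + conv_grad gW (\<rho> t) x))\<^sup>2"

definition AC2_curve :: "real \<Rightarrow> real \<Rightarrow> (real \<Rightarrow> real^'n) \<Rightarrow> (real \<Rightarrow> real^'n) \<Rightarrow> bool" where
  "AC2_curve a b \<gamma> \<gamma>' \<longleftrightarrow>
     \<gamma>' absolutely_integrable_on {a..b} \<and>
     (\<lambda>s. (norm (\<gamma>' s))\<^sup>2) integrable_on {a..b} \<and>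
     (\<forall>s\<in>{a..b}. \<gamma> s = \<gamma> a + integral {a..s} \<gamma>')"

text \<open>D_\<rho>(x,y;t,h): curves from x to (a lift of) y, i.e. \<gamma>(t+h) - y \<in> Z^d.\<close>
definition cost ::
  "(real^'n \<Rightarrow> real^'n) \<Rightarrow> (real^'n \<Rightarrow> real^'n) \<Rightarrow> (real \<Rightarrow> (real^'n) measure)
   \<Rightarrow> real^'n \<Rightarrow> real^'n \<Rightarrow> real \<Rightarrow> real \<Rightarrow> real" where
  "cost gV gW \<rho> x y t h = Inf {integral {t..t+h} (\<lambda>s. lagrangian gV gW \<rho> (\<gamma>' s) (\<gamma> s) s) | \<gamma> \<gamma>'.
       AC2_curve t (t+h) \<gamma> \<gamma>' \<and> \<gamma> t = x \<and> int_vec (\<gamma> (t+h) - y) \<and>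
       (\<lambda>s. lagrangian gV gW \<rho> (\<gamma>' s) (\<gamma> s) s) integrable_on {t..t+h}}"

end

theory Submission
  imports Defs
begin

(* Test the infimum defining D_rho with the straight segment from x to the lift y + k of y
   closest to x, travelled at constant velocity v = (y + k - x)/h. Since the convolution
   grad W * rho_s is bounded by |grad W|_2, the Lagrangian along it is at most
   (|v| + |grad V|_2 + |grad W|_2)^2/4, and integrating over [t, t+h] gives exactly the bound.
   The real work is admissibility, i.e. integrability of the Lagrangian along the segment.
   It is continuous: grad W is periodic with Lipschitz Hessian, hence Lipschitz for the flat
   distance, so grad W * mu is Lipschitz in mu for W2 (estimate along an arbitrary coupling),
   and the gradient flow rho is W2-continuous because it is locally absolutely continuous. *)

section \<open>The flat distance\<close>

lemma int_vec_zero [simp]: "int_vec 0"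
  by (simp add: int_vec_def)

lemma int_vec_uminus: "int_vec k \<Longrightarrow> int_vec (- k)"
  by (simp add: int_vec_def)

lemma closed_int_vecs: "closed {k :: real^'n. int_vec k}"
proof -
  have "{k :: real^'n. int_vec k} = (\<Inter>i. (\<lambda>k. k $ i) -` \<int>)"
    by (auto simp: int_vec_def)
  then show ?thesis
    by (simp add: closed_INT closed_vimage continuous_at_imp_continuous_on)
qed

lemma int_vec_shift_into_unit_cbox:
  fixes x :: "real^'n"
  obtains k where "int_vec k" "x - k \<in> cbox 0 1"
proof
  show "int_vec (\<chi> i. of_int \<lfloor>x $ i\<rfloor>)"
    by (simp add: int_vec_def)
  show "x - (\<chi> i. of_int \<lfloor>x $ i\<rfloor>) \<in> cbox 0 1"
    by (auto simp: mem_box_cart) (smt (verit) real_of_int_floor_add_one_gt)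
qed

lemma torus_dist_infdist: "torus_dist x y = infdist (x - y) {k. int_vec k}"
proof -
  have "{k :: real^'n. int_vec k} \<noteq> {}" using int_vec_zero by blast
  then show ?thesis unfolding torus_dist_def infdist_def by (auto simp: dist_norm)
qed

lemma torus_dist_nonneg: "0 \<le> torus_dist x y"
  by (simp add: torus_dist_infdist infdist_nonneg)

lemma torus_dist_le: "int_vec k \<Longrightarrow> torus_dist x y \<le> norm (x - y - k)"
  by (simp add: torus_dist_infdist infdist_le flip: dist_norm)

lemma torus_dist_attained:
  fixes x y :: "real^'n"
  obtains k where "int_vec k" "torus_dist x y = norm (x - y - k)"
proof -
  have nonempty: "{k :: real^'n. int_vec k} \<noteq> {}" using int_vec_zero by blast
  obtain k where k: "int_vec k" and min: "\<And>l. int_vec l \<Longrightarrow> dist (x - y) k \<le> dist (x - y) l"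
    using distance_attains_inf[OF closed_int_vecs nonempty, of "x - y"] by auto
  have "norm (x - y - k) \<le> torus_dist x y"
    unfolding torus_dist_infdist infdist_notempty[of "{k. int_vec k}", OF nonempty]
    using min k by (intro cINF_greatest) (auto simp: dist_norm)
  then show ?thesis
    using that[OF k] torus_dist_le[OF k, of x y] by linarith
qed

lemma torus_dist_bounded: "\<exists>R. \<forall>x y :: real^'n. torus_dist x y \<le> R"
proof -
  obtain R where R: "\<And>z :: real^'n. z \<in> cbox 0 1 \<Longrightarrow> norm z \<le> R"
    using bounded_cbox bounded_iff by metis
  have "torus_dist x y \<le> R" for x y :: "real^'n"
  proof -
    obtain k where "int_vec k" "x - y - k \<in> cbox 0 1"
      by (rule int_vec_shift_into_unit_cbox)
    then show ?thesis using torus_dist_le R by (meson order_trans)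
  qed
  then show ?thesis by blast
qed

lemma torus_dist_diff_le: "torus_dist (z - a) (z' - b) \<le> norm (z - z') + torus_dist a b"
proof -
  obtain k where k: "int_vec k" "torus_dist a b = norm (a - b - k)"
    by (rule torus_dist_attained)
  have "torus_dist (z - a) (z' - b) \<le> norm ((z - a) - (z' - b) - (- k))"
    by (rule torus_dist_le[OF int_vec_uminus[OF k(1)]])
  also have "\<dots> = norm ((z - z') - (a - b - k))"
    by (simp add: algebra_simps)
  also have "\<dots> \<le> norm (z - z') + torus_dist a b"
    using k(2) by (simp add: norm_triangle_ineq4)
  finally show ?thesis .
qed

lemma continuous_on_torus_dist:
  "continuous_on UNIV (\<lambda>p :: (real^'n) \<times> (real^'n). torus_dist (fst p) (snd p))"
  unfolding torus_dist_infdist by (intro continuous_intros)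

section \<open>Periodic functions and their gradients\<close>

lemma periodic_derivative:
  fixes f :: "real^'n \<Rightarrow> 'b::real_normed_vector"
  assumes "periodic f" and f': "\<And>x. (f has_derivative f' x) (at x)" and "int_vec k"
  shows "f' (x + k) = f' x"
proof -
  have "((\<lambda>z. z + k) has_derivative (\<lambda>h. h)) (at x)"
    by (auto intro!: derivative_eq_intros)
  then have "((\<lambda>z. f (z + k)) has_derivative f' (x + k)) (at x)"
    using has_derivative_compose f'[of "x + k"] by fastforce
  moreover have "(\<lambda>z. f (z + k)) = f"
    using assms(1,3) unfolding periodic_def by auto
  ultimately show ?thesis
    using f'[of x] by (auto intro: has_derivative_unique)
qed

lemma periodic_gradient:
  fixes f :: "real^'n \<Rightarrow> real"
  assumes "periodic f" and "\<And>x. (f has_derivative (\<lambda>v. g x \<bullet> v)) (at x)"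
  shows "periodic g"
  unfolding periodic_def
proof (intro allI impI)
  fix x k :: "real^'n"
  assume "int_vec k"
  then have "(\<lambda>v. g (x + k) \<bullet> v) = (\<lambda>v. g x \<bullet> v)"
    using periodic_derivative[where f' = "\<lambda>x v. g x \<bullet> v", OF assms] by blast
  then have "(g (x + k) - g x) \<bullet> (g (x + k) - g x) = 0"
    by (metis inner_diff_left right_minus_eq)
  then show "g (x + k) = g x" by simp
qed

lemma periodic_continuous_bounded:
  fixes f :: "real^'n \<Rightarrow> 'b::real_normed_vector"
  assumes "periodic f" and "continuous_on UNIV f"
  obtains M where "\<And>x. norm (f x) \<le> M"
proof -
  have "compact (f ` cbox 0 1)"
    using assms(2) by (intro compact_continuous_image) (auto intro: continuous_on_subset)
  then obtain M where M: "\<And>z. z \<in> cbox 0 1 \<Longrightarrow> norm (f z) \<le> M"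
    using compact_imp_bounded bounded_iff by (metis image_eqI)
  have "norm (f x) \<le> M" for x
  proof -
    obtain k where k: "int_vec k" "x - k \<in> cbox 0 1"
      by (rule int_vec_shift_into_unit_cbox)
    have "f x = f ((x - k) + k)" by simp
    also have "\<dots> = f (x - k)" using assms(1) k(1) unfolding periodic_def by blast
    finally show ?thesis using M[OF k(2)] by simp
  qed
  then show ?thesis by (rule that)
qed

lemma periodic_lipschitz_torus_dist:
  fixes g :: "real^'n \<Rightarrow> 'b::real_normed_vector"
  assumes "periodic g" and "K-lipschitz_on UNIV g"
  shows "norm (g u - g v) \<le> K * torus_dist u v"
proof -
  obtain k where k: "int_vec k" "torus_dist u v = norm (u - v - k)"
    by (rule torus_dist_attained)
  have "g v = g (v + k)" using assms(1) k(1) unfolding periodic_def by simp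
  then show ?thesis
    using lipschitz_on_normD[OF assms(2), of u "v + k"] k(2) by (simp add: diff_diff_eq)
qed

lemma sup_norm_upper:
  assumes "\<And>x. norm (U x) \<le> M"
  shows "norm (U x) \<le> sup_norm U"
  unfolding sup_norm_def by (rule cSup_upper) (use assms in \<open>auto intro!: bdd_aboveI2\<close>)

lemma C21_periodic_gradient:
  fixes f :: "real^'n \<Rightarrow> real"
  assumes "periodic f" and "C21 f g"
  shows "continuous_on UNIV g" "periodic g" "\<And>x. norm (g x) \<le> sup_norm g"
proof -
  show "periodic g"
    using assms periodic_gradient unfolding C21_def by blast
  show "continuous_on UNIV g"
    using assms(2) unfolding C21_def
    by (meson continuous_at_imp_continuous_on has_derivative_continuous)
  with \<open>periodic g\<close> obtain M where "\<And>x. norm (g x) \<le> M"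
    using periodic_continuous_bounded by blast
  then show "\<And>x. norm (g x) \<le> sup_norm g"
    by (rule sup_norm_upper)
qed

lemma C21_periodic_gradient_lipschitz:
  fixes f :: "real^'n \<Rightarrow> real"
  assumes "periodic f" and "C21 f g"
  obtains K where "K-lipschitz_on UNIV g"
proof -
  obtain H L where H: "\<And>x. (g has_derivative H x) (at x)"
    and HL: "\<And>x y. onorm (\<lambda>v. H x v - H y v) \<le> L * dist x y"
    using assms(2) unfolding C21_def by blast
  have "periodic g" using C21_periodic_gradient[OF assms] by blast
  have lin: "\<And>x. bounded_linear (H x)" using H has_derivative_bounded_linear by blast
  obtain R where R: "\<And>z :: real^'n. z \<in> cbox 0 1 \<Longrightarrow> norm z \<le> R"
    using bounded_cbox bounded_iff by metis
  define B where "B = onorm (H 0) + \<bar>L\<bar> * R"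
  \<comment> \<open>The Hessian is periodic, so its Lipschitz bound is only needed on the unit cube.\<close>
  have H_bound: "onorm (H x) \<le> B" for x
  proof -
    obtain k where k: "int_vec k" "x - k \<in> cbox 0 1"
      by (rule int_vec_shift_into_unit_cbox)
    have "H x = H ((x - k) + k)" by simp
    also have "\<dots> = H (x - k)" by (rule periodic_derivative[OF \<open>periodic g\<close> H k(1)])
    finally have "onorm (H x) = onorm (H (x - k))" by simp
    also have "\<dots> = onorm (\<lambda>v. H 0 v + (H (x - k) v - H 0 v))" by simp
    also have "\<dots> \<le> onorm (H 0) + onorm (\<lambda>v. H (x - k) v - H 0 v)"
      using lin by (intro onorm_triangle bounded_linear_sub) auto
    also have "\<dots> \<le> onorm (H 0) + L * dist (x - k) 0"
      using HL[of "x - k" 0] by simp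
    also have "L * dist (x - k) 0 \<le> \<bar>L\<bar> * R"
      using R[OF k(2)]
      by (intro order_trans[OF mult_right_mono[OF abs_ge_self] mult_left_mono]) auto
    finally show ?thesis unfolding B_def by simp
  qed
  have "0 \<le> B"
    using onorm_pos_le[OF lin[of 0]] R[of 0] unfolding B_def by (simp add: mem_box_cart)
  with H H_bound show ?thesis
    by (intro that bounded_derivative_imp_lipschitz) auto
qed

section \<open>The convolution term and the Wasserstein distance\<close>

lemma product_coupling:
  fixes \<mu> \<nu> :: "(real^'n) measure"
  assumes "\<mu> \<in> prob_torus" and "\<nu> \<in> prob_torus"
  shows "\<mu> \<Otimes>\<^sub>M \<nu> \<in> couplings \<mu> \<nu>"
proof -
  interpret \<mu>: prob_space \<mu> using assms(1) by (simp add: prob_torus_def)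
  interpret \<nu>: prob_space \<nu> using assms(2) by (simp add: prob_torus_def)
  have sets: "sets \<mu> = sets borel" "sets \<nu> = sets borel"
    using assms by (auto simp: prob_torus_def)
  have "distr (\<mu> \<Otimes>\<^sub>M \<nu>) borel fst = distr (\<mu> \<Otimes>\<^sub>M \<nu>) \<mu> fst"
    using sets by (intro distr_cong) auto
  also have "\<dots> = \<mu>" by (rule \<nu>.distr_pair_fst)
  finally have fst: "distr (\<mu> \<Otimes>\<^sub>M \<nu>) borel fst = \<mu>" .
  have "distr (\<mu> \<Otimes>\<^sub>M \<nu>) borel snd = distr (\<mu> \<Otimes>\<^sub>M \<nu>) \<nu> snd"
    using sets by (intro distr_cong) auto
  also have "\<dots> = \<nu>"
  proof (intro measure_eqI)
    fix A assume A: "A \<in> sets (distr (\<mu> \<Otimes>\<^sub>M \<nu>) \<nu> snd)"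
    then have "emeasure (distr (\<mu> \<Otimes>\<^sub>M \<nu>) \<nu> snd) A = emeasure (\<mu> \<Otimes>\<^sub>M \<nu>) (space \<mu> \<times> A)"
      by (auto simp: emeasure_distr space_pair_measure dest: sets.sets_into_space
          intro!: arg_cong2[where f = emeasure])
    with A show "emeasure (distr (\<mu> \<Otimes>\<^sub>M \<nu>) \<nu> snd) A = emeasure \<nu> A"
      by (simp add: \<nu>.emeasure_pair_measure_Times \<mu>.emeasure_space_1)
  qed simp
  finally have snd: "distr (\<mu> \<Otimes>\<^sub>M \<nu>) borel snd = \<nu>" .
  have "sets (\<mu> \<Otimes>\<^sub>M \<nu>) = sets (borel :: ((real^'n) \<times> (real^'n)) measure)"
    using sets_pair_measure_cong[OF sets] borel_prod by metis
  then show ?thesis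
    unfolding couplings_def
    using fst snd prob_space_pair[OF \<mu>.prob_space_axioms \<nu>.prob_space_axioms] by simp
qed

lemma (in prob_space) expectation_le_sqrt_second_moment:
  fixes X :: "'a \<Rightarrow> real"
  assumes "integrable M X" and "integrable M (\<lambda>x. (X x)\<^sup>2)"
  shows "expectation X \<le> sqrt (expectation (\<lambda>x. (X x)\<^sup>2))"
proof -
  have "(expectation X)\<^sup>2 \<le> expectation (\<lambda>x. (X x)\<^sup>2)"
    using variance_eq[OF assms] variance_positive[of X] by simp
  then show ?thesis by (rule real_le_rsqrt)
qed

lemma conv_grad_norm_le:
  fixes g :: "real^'n \<Rightarrow> real^'n"
  assumes "\<mu> \<in> prob_torus" and "g \<in> borel_measurable borel" and "\<And>x. norm (g x) \<le> M"
  shows "norm (conv_grad g \<mu> z) \<le> M"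
proof -
  interpret prob_space \<mu> using assms(1) by (simp add: prob_torus_def)
  have "sets \<mu> = sets borel" using assms(1) by (simp add: prob_torus_def)
  moreover have "(\<lambda>a. g (z - a)) \<in> borel_measurable borel" using assms(2) by measurable
  ultimately have "(\<lambda>a. g (z - a)) \<in> borel_measurable \<mu>"
    using measurable_cong_sets by blast
  then have "integrable \<mu> (\<lambda>a. g (z - a))"
    using assms(3) by (intro integrable_const_bound[where B = M]) auto
  then have "norm (conv_grad g \<mu> z) \<le> (\<integral>a. M \<partial>\<mu>)"
    unfolding conv_grad_def using assms(3)
    by (intro Bochner_Integration.integral_norm_bound_integral) auto
  then show ?thesis by (simp add: prob_space)
qed

lemma couplings_measurable:
  assumes "\<pi> \<in> couplings \<mu> \<nu>" and "f \<in> borel_measurable borel"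
  shows "f \<in> borel_measurable \<pi>"
proof -
  have "sets \<pi> = sets borel" using assms(1) by (simp add: couplings_def)
  then show ?thesis by (subst measurable_cong_sets[OF _ refl]) (use assms(2) in auto)
qed

lemma couplings_integral_fst:
  fixes f :: "real^'n \<Rightarrow> 'b::{banach, second_countable_topology}"
  assumes "\<pi> \<in> couplings \<mu> \<nu>" and "f \<in> borel_measurable borel"
  shows "(\<integral>x. f x \<partial>\<mu>) = (\<integral>p. f (fst p) \<partial>\<pi>)"
proof -
  have "fst \<in> borel_measurable \<pi>"
    using assms(1) by (rule couplings_measurable) (intro borel_measurable_continuous_onI continuous_intros)
  then show ?thesis
    using integral_distr[OF _ assms(2)] assms(1) by (auto simp: couplings_def)
qed

lemma couplings_integral_snd:
  fixes f :: "real^'n \<Rightarrow> 'b::{banach, second_countable_topology}"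
  assumes "\<pi> \<in> couplings \<mu> \<nu>" and "f \<in> borel_measurable borel"
  shows "(\<integral>x. f x \<partial>\<nu>) = (\<integral>p. f (snd p) \<partial>\<pi>)"
proof -
  have "snd \<in> borel_measurable \<pi>"
    using assms(1) by (rule couplings_measurable) (intro borel_measurable_continuous_onI continuous_intros)
  then show ?thesis
    using integral_distr[OF _ assms(2)] assms(1) by (auto simp: couplings_def)
qed

lemma couplings_integrable_bounded:
  fixes f :: "(real^'n) \<times> (real^'n) \<Rightarrow> 'b::{banach, second_countable_topology}"
  assumes "\<pi> \<in> couplings \<mu> \<nu>" and "continuous_on UNIV f" and "\<And>p. norm (f p) \<le> M"
  shows "integrable \<pi> f"
proof -
  interpret prob_space \<pi> using assms(1) by (simp add: couplings_def)
  have "f \<in> borel_measurable \<pi>"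
    using assms(1) borel_measurable_continuous_onI[OF assms(2)] by (rule couplings_measurable)
  then show ?thesis using assms(3) by (intro integrable_const_bound[where B = M]) auto
qed

lemma conv_grad_diff_le_coupling:
  fixes g :: "real^'n \<Rightarrow> real^'n"
  assumes \<pi>: "\<pi> \<in> couplings \<mu> \<nu>" and "periodic g" and lip: "K-lipschitz_on UNIV g"
  shows "norm (conv_grad g \<mu> z - conv_grad g \<nu> z')
           \<le> K * norm (z - z') + K * sqrt (\<integral>p. (torus_dist (fst p) (snd p))\<^sup>2 \<partial>\<pi>)"
proof -
  interpret prob_space \<pi> using \<pi> by (simp add: couplings_def)
  define d where "d = (\<lambda>p :: (real^'n) \<times> (real^'n). torus_dist (fst p) (snd p))"
  have cont: "continuous_on UNIV g" using lip by (rule lipschitz_on_continuous_on)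
  obtain M where M: "\<And>x. norm (g x) \<le> M"
    using periodic_continuous_bounded[OF \<open>periodic g\<close> cont] by blast
  obtain R where R: "\<And>x y :: real^'n. torus_dist x y \<le> R" using torus_dist_bounded by blast
  have K: "0 \<le> K" using lip by (rule lipschitz_on_nonneg)
  have d_bound: "norm (d p) \<le> R" for p
    using R torus_dist_nonneg unfolding d_def by (metis abs_of_nonneg real_norm_def)
  have int_d: "integrable \<pi> d"
    using \<pi> continuous_on_torus_dist d_bound unfolding d_def by (rule couplings_integrable_bounded)
  have "norm ((d p)\<^sup>2) \<le> R\<^sup>2" for p
    unfolding norm_power by (rule power_mono[OF d_bound norm_ge_zero])
  then have int_d2: "integrable \<pi> (\<lambda>p. (d p)\<^sup>2)"
    using \<pi> unfolding d_def
    by (intro couplings_integrable_bounded[where M = "R\<^sup>2"] continuous_intros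
        continuous_on_torus_dist)
  have g_shift: "continuous_on UNIV (\<lambda>a. g (w - a))" for w
    using continuous_on_compose2[OF cont continuous_on_diff[OF continuous_on_const continuous_on_id]]
    by simp
  have int_fst: "integrable \<pi> (\<lambda>p. g (z - fst p))"
    using \<pi> continuous_on_compose2[OF g_shift continuous_on_fst[OF continuous_on_id]] M
    by (rule couplings_integrable_bounded) simp
  have int_snd: "integrable \<pi> (\<lambda>p. g (z' - snd p))"
    using \<pi> continuous_on_compose2[OF g_shift continuous_on_snd[OF continuous_on_id]] M
    by (rule couplings_integrable_bounded) simp
  have "conv_grad g \<mu> z - conv_grad g \<nu> z' = (\<integral>p. g (z - fst p) \<partial>\<pi>) - (\<integral>p. g (z' - snd p) \<partial>\<pi>)"
    unfolding conv_grad_def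
    using couplings_integral_fst[OF \<pi>, of "\<lambda>a. g (z - a)"]
      couplings_integral_snd[OF \<pi>, of "\<lambda>a. g (z' - a)"]
      borel_measurable_continuous_onI[OF g_shift] by simp
  also have "\<dots> = (\<integral>p. g (z - fst p) - g (z' - snd p) \<partial>\<pi>)"
    using int_fst int_snd by (rule Bochner_Integration.integral_diff[symmetric])
  also have "norm \<dots> \<le> (\<integral>p. K * norm (z - z') + K * d p \<partial>\<pi>)"
  proof (intro Bochner_Integration.integral_norm_bound_integral)
    show "integrable \<pi> (\<lambda>p. g (z - fst p) - g (z' - snd p))"
      using int_fst int_snd by (rule Bochner_Integration.integrable_diff)
    show "integrable \<pi> (\<lambda>p. K * norm (z - z') + K * d p)"
      using int_d by simp
    fix p
    show "norm (g (z - fst p) - g (z' - snd p)) \<le> K * norm (z - z') + K * d p"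
      using periodic_lipschitz_torus_dist[OF \<open>periodic g\<close> lip, of "z - fst p" "z' - snd p"]
        mult_left_mono[OF torus_dist_diff_le K, of z "fst p" z' "snd p"]
      unfolding d_def distrib_left by linarith
  qed
  also have "\<dots> = K * norm (z - z') + K * expectation d"
    using int_d by (simp add: prob_space)
  also have "\<dots> \<le> K * norm (z - z') + K * sqrt (expectation (\<lambda>p. (d p)\<^sup>2))"
    using expectation_le_sqrt_second_moment[OF int_d int_d2] K by (simp add: mult_left_mono)
  finally show ?thesis unfolding d_def .
qed

lemma le_W2I:
  assumes "\<mu> \<in> prob_torus" and "\<nu> \<in> prob_torus"
    and le: "\<And>\<pi>. \<pi> \<in> couplings \<mu> \<nu> \<Longrightarrow> a \<le> sqrt (\<integral>p. (torus_dist (fst p) (snd p))\<^sup>2 \<partial>\<pi>)"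
  shows "a \<le> W2 \<mu> \<nu>"
proof -
  define S where "S = (\<lambda>\<pi>. \<integral>p. (torus_dist (fst p) (snd p))\<^sup>2 \<partial>\<pi>) ` couplings \<mu> \<nu>"
  have "S \<noteq> {}" unfolding S_def using product_coupling[OF assms(1,2)] by blast
  have S_nonneg: "0 \<le> s" if "s \<in> S" for s
    using that unfolding S_def by auto
  have "0 \<le> Inf S" using \<open>S \<noteq> {}\<close> S_nonneg by (intro cInf_greatest)
  show ?thesis
  proof (cases "a \<le> 0")
    case True
    then show ?thesis
      using real_sqrt_ge_zero[OF \<open>0 \<le> Inf S\<close>] unfolding W2_def S_def[symmetric] by linarith
  next
    case False
    have "a\<^sup>2 \<le> s" if "s \<in> S" for s
    proof -
      have "a \<le> sqrt s" using le that unfolding S_def by blast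
      then have "a\<^sup>2 \<le> (sqrt s)\<^sup>2" using False by (intro power_mono) auto
      then show ?thesis using S_nonneg[OF that] by simp
    qed
    then have "a\<^sup>2 \<le> Inf S" using \<open>S \<noteq> {}\<close> by (intro cInf_greatest)
    then show ?thesis unfolding W2_def S_def[symmetric] by (rule real_le_rsqrt)
  qed
qed

lemma conv_grad_diff_le_W2:
  fixes g :: "real^'n \<Rightarrow> real^'n"
  assumes "\<mu> \<in> prob_torus" and "\<nu> \<in> prob_torus" and "periodic g" and lip: "K-lipschitz_on UNIV g"
  shows "norm (conv_grad g \<mu> z - conv_grad g \<nu> z') \<le> K * norm (z - z') + K * W2 \<mu> \<nu>"
proof (cases "K = 0")
  case True
  then show ?thesis
    using conv_grad_diff_le_coupling[OF product_coupling[OF assms(1,2)] assms(3,4)] by simp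
next
  case False
  then have "K > 0" using lipschitz_on_nonneg[OF lip] by simp
  define A where "A = norm (conv_grad g \<mu> z - conv_grad g \<nu> z')"
  have "(A - K * norm (z - z')) / K \<le> W2 \<mu> \<nu>"
  proof (rule le_W2I[OF assms(1,2)])
    fix \<pi> assume "\<pi> \<in> couplings \<mu> \<nu>"
    have "A \<le> K * norm (z - z') + K * sqrt (\<integral>p. (torus_dist (fst p) (snd p))\<^sup>2 \<partial>\<pi>)"
      unfolding A_def by (rule conv_grad_diff_le_coupling[OF \<open>\<pi> \<in> couplings \<mu> \<nu>\<close> assms(3,4)])
    then show "(A - K * norm (z - z')) / K \<le> sqrt (\<integral>p. (torus_dist (fst p) (snd p))\<^sup>2 \<partial>\<pi>)"
      using \<open>K > 0\<close> by (simp add: pos_divide_le_eq algebra_simps)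
  qed
  then show ?thesis unfolding A_def using \<open>K > 0\<close> by (simp add: pos_divide_le_eq algebra_simps)
qed

section \<open>Continuity along the flow\<close>

lemma continuous_on_dist_le_sum:
  assumes f: "continuous_on S f" and g: "continuous_on S g"
    and le: "\<And>x y. x \<in> S \<Longrightarrow> y \<in> S \<Longrightarrow> dist (u y) (u x) \<le> dist (f y) (f x) + dist (g y) (g x)"
  shows "continuous_on S u"
  unfolding continuous_on_def
proof
  fix x assume "x \<in> S"
  have "\<forall>\<^sub>F y in at x within S. norm (dist (u y) (u x)) \<le> dist (f y) (f x) + dist (g y) (g x)"
    using le[OF \<open>x \<in> S\<close>] by (auto simp: eventually_at_filter)
  moreover have "((\<lambda>y. dist (f y) (f x) + dist (g y) (g x)) \<longlongrightarrow> 0) (at x within S)"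
  proof (rule tendsto_add_zero)
    show "((\<lambda>y. dist (f y) (f x)) \<longlongrightarrow> 0) (at x within S)"
      using f \<open>x \<in> S\<close> unfolding continuous_on_def by (simp flip: tendsto_dist_iff)
    show "((\<lambda>y. dist (g y) (g x)) \<longlongrightarrow> 0) (at x within S)"
      using g \<open>x \<in> S\<close> unfolding continuous_on_def by (simp flip: tendsto_dist_iff)
  qed
  ultimately have "((\<lambda>y. dist (u y) (u x)) \<longlongrightarrow> 0) (at x within S)"
    by (rule Lim_null_comparison)
  then show "(u \<longlongrightarrow> u x) (at x within S)"
    by (simp flip: tendsto_dist_iff)
qed

lemma loc_AC_curve_W2_le:
  assumes "loc_AC_curve \<rho>" and "0 < a"
  obtains \<omega> where "continuous_on {a..b} \<omega>"
    and "\<And>s s'. a \<le> s \<Longrightarrow> s \<le> s' \<Longrightarrow> W2 (\<rho> s) (\<rho> s') \<le> \<omega> s' - \<omega> s"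
proof -
  obtain m :: "real \<Rightarrow> real" where m: "\<And>a b. 0 < a \<Longrightarrow> m integrable_on {a..b}"
    and W2_le: "\<And>s s'. 0 < s \<Longrightarrow> s \<le> s' \<Longrightarrow> W2 (\<rho> s) (\<rho> s') \<le> integral {s..s'} m"
    using assms(1) unfolding loc_AC_curve_def by blast
  show ?thesis
  proof
    show "continuous_on {a..b} (\<lambda>u. integral {a..u} m)"
      using m[OF assms(2)] by (rule indefinite_integral_continuous_1)
    fix s s' assume "a \<le> s" "s \<le> s'"
    moreover have "integral {a..s} m + integral {s..s'} m = integral {a..s'} m"
      using calculation m[OF assms(2)]
      by (intro Henstock_Kurzweil_Integration.integral_combine) auto
    ultimately show "W2 (\<rho> s) (\<rho> s') \<le> integral {a..s'} m - integral {a..s} m"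
      using W2_le[of s s'] assms(2) by auto
  qed
qed

lemma continuous_on_conv_grad_along_curve:
  fixes g :: "real^'n \<Rightarrow> real^'n" and a b :: real
  assumes prob: "\<And>s. s \<in> {a..b} \<Longrightarrow> \<rho> s \<in> prob_torus"
    and "continuous_on {a..b} \<omega>"
    and W2_le: "\<And>s s'. a \<le> s \<Longrightarrow> s \<le> s' \<Longrightarrow> W2 (\<rho> s) (\<rho> s') \<le> \<omega> s' - \<omega> s"
    and "continuous_on {a..b} \<gamma>" and "periodic g" and lip: "K-lipschitz_on UNIV g"
  shows "continuous_on {a..b} (\<lambda>s. conv_grad g (\<rho> s) (\<gamma> s))"
proof (rule continuous_on_dist_le_sum)
  show "continuous_on {a..b} (\<lambda>s. K *\<^sub>R \<gamma> s)"
    using assms(4) by (intro continuous_intros)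
  show "continuous_on {a..b} (\<lambda>s. K * \<omega> s)"
    using assms(2) by (intro continuous_intros)
  have K: "0 \<le> K" using lip by (rule lipschitz_on_nonneg)
  have ordered: "dist (conv_grad g (\<rho> s) (\<gamma> s)) (conv_grad g (\<rho> s') (\<gamma> s'))
      \<le> K * norm (\<gamma> s - \<gamma> s') + K * \<bar>\<omega> s' - \<omega> s\<bar>"
    if "s \<in> {a..b}" "s' \<in> {a..b}" "s \<le> s'" for s s'
  proof -
    have "dist (conv_grad g (\<rho> s) (\<gamma> s)) (conv_grad g (\<rho> s') (\<gamma> s'))
        \<le> K * norm (\<gamma> s - \<gamma> s') + K * W2 (\<rho> s) (\<rho> s')"
      unfolding dist_norm using prob that by (intro conv_grad_diff_le_W2 assms(5,6)) simp_all
    also have "\<dots> \<le> K * norm (\<gamma> s - \<gamma> s') + K * \<bar>\<omega> s' - \<omega> s\<bar>"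
      using W2_le[of s s'] that K by (intro add_left_mono mult_left_mono) auto
    finally show ?thesis .
  qed
  fix s s' assume "s \<in> {a..b}" "s' \<in> {a..b}"
  moreover have "dist (K *\<^sub>R \<gamma> s') (K *\<^sub>R \<gamma> s) = K * norm (\<gamma> s - \<gamma> s')"
    using K by (simp add: dist_norm norm_minus_commute flip: scaleR_diff_right)
  moreover have "dist (K * \<omega> s') (K * \<omega> s) = K * \<bar>\<omega> s' - \<omega> s\<bar>"
    using K by (simp add: dist_real_def abs_mult flip: right_diff_distrib)
  ultimately show "dist (conv_grad g (\<rho> s') (\<gamma> s')) (conv_grad g (\<rho> s) (\<gamma> s))
      \<le> dist (K *\<^sub>R \<gamma> s') (K *\<^sub>R \<gamma> s) + dist (K * \<omega> s') (K * \<omega> s)"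
    using ordered[of s s'] ordered[of s' s] linorder_le_cases[of s s']
    by (auto simp: dist_commute norm_minus_commute abs_minus_commute)
qed

section \<open>The cost of a straight segment\<close>

lemma cost_le_action:
  assumes "AC2_curve t (t + h) \<gamma> \<gamma>'" and "\<gamma> t = x" and "int_vec (\<gamma> (t + h) - y)"
    and "(\<lambda>s. lagrangian gV gW \<rho> (\<gamma>' s) (\<gamma> s) s) integrable_on {t..t + h}"
  shows "cost gV gW \<rho> x y t h \<le> integral {t..t + h} (\<lambda>s. lagrangian gV gW \<rho> (\<gamma>' s) (\<gamma> s) s)"
  unfolding cost_def
proof (rule cInf_lower)
  show "integral {t..t + h} (\<lambda>s. lagrangian gV gW \<rho> (\<gamma>' s) (\<gamma> s) s) \<in> {integral {t..t + h}
      (\<lambda>s. lagrangian gV gW \<rho> (\<gamma>' s) (\<gamma> s) s) | \<gamma> \<gamma>'. AC2_curve t (t + h) \<gamma> \<gamma>' \<and> \<gamma> t = x \<and>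
      int_vec (\<gamma> (t + h) - y) \<and> (\<lambda>s. lagrangian gV gW \<rho> (\<gamma>' s) (\<gamma> s) s) integrable_on {t..t + h}}"
    using assms by blast
  have "0 \<le> integral {t..t + h} (\<lambda>s. lagrangian gV gW \<rho> (\<gamma>' s) (\<gamma> s) s)"
    if "(\<lambda>s. lagrangian gV gW \<rho> (\<gamma>' s) (\<gamma> s) s) integrable_on {t..t + h}" for \<gamma> \<gamma>'
    using that by (rule integral_nonneg) (simp add: lagrangian_def)
  then show "bdd_below {integral {t..t + h}
      (\<lambda>s. lagrangian gV gW \<rho> (\<gamma>' s) (\<gamma> s) s) | \<gamma> \<gamma>'. AC2_curve t (t + h) \<gamma> \<gamma>' \<and> \<gamma> t = x \<and>
      int_vec (\<gamma> (t + h) - y) \<and> (\<lambda>s. lagrangian gV gW \<rho> (\<gamma>' s) (\<gamma> s) s) integrable_on {t..t + h}}"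
    by (intro bdd_belowI[of _ 0]) blast
qed

lemma AC2_curve_linear: "AC2_curve a b (\<lambda>s. x + (s - a) *\<^sub>R v) (\<lambda>_. v)"
  unfolding AC2_curve_def by (auto intro: integrable_const_ivl)

lemma lagrangian_le:
  assumes "norm (gV x) \<le> BV" and "norm (conv_grad gW (\<rho> s) x) \<le> BW"
  shows "lagrangian gV gW \<rho> p x s \<le> (1/4) * (norm p + BV + BW)\<^sup>2"
proof -
  have "norm (p + gV x + conv_grad gW (\<rho> s) x) \<le> norm p + BV + BW"
    using assms norm_triangle_ineq[of "p + gV x" "conv_grad gW (\<rho> s) x"]
      norm_triangle_ineq[of p "gV x"] by linarith
  then show ?thesis
    unfolding lagrangian_def by (intro mult_left_mono power_mono) auto
qed

lemma integrable_lagrangian_along_curve: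
  fixes gV gW :: "real^'n \<Rightarrow> real^'n"
  assumes flow: "gradient_flow F \<rho>" and "t > 0"
    and "continuous_on UNIV gV" and "periodic gW" and "K-lipschitz_on UNIV gW"
    and "continuous_on {t..t + h} \<gamma>" and "continuous_on {t..t + h} \<gamma>'"
  shows "(\<lambda>s. lagrangian gV gW \<rho> (\<gamma>' s) (\<gamma> s) s) integrable_on {t..t + h}"
proof -
  have "\<rho> s \<in> prob_torus" if "s \<in> {t..t + h}" for s
    using flow that \<open>t > 0\<close> by (simp add: gradient_flow_def)
  moreover have "loc_AC_curve \<rho>" using flow by (simp add: gradient_flow_def)
  then obtain \<omega> where "continuous_on {t..t + h} \<omega>"
    and "\<And>s s'. t \<le> s \<Longrightarrow> s \<le> s' \<Longrightarrow> W2 (\<rho> s) (\<rho> s') \<le> \<omega> s' - \<omega> s"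
    using loc_AC_curve_W2_le[OF _ \<open>t > 0\<close>] by blast
  ultimately have "continuous_on {t..t + h} (\<lambda>s. conv_grad gW (\<rho> s) (\<gamma> s))"
    using assms(4-6) by (intro continuous_on_conv_grad_along_curve)
  then have "continuous_on {t..t + h} (\<lambda>s. lagrangian gV gW \<rho> (\<gamma>' s) (\<gamma> s) s)"
    unfolding lagrangian_def using assms(6,7)
    by (intro continuous_intros continuous_on_compose2[OF assms(3)]) auto
  then show ?thesis by (rule integrable_continuous_interval)
qed

lemma straight_line_action_eq:
  assumes "h > 0"
  shows "h * ((1/4) * (d / h + B)\<^sup>2) = (d / (2 * sqrt h) + (1/2) * sqrt h * B)\<^sup>2"
proof -
  define r where "r = sqrt h"
  have "r > 0" and h: "h = r\<^sup>2" using assms by (auto simp: r_def)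
  then show ?thesis unfolding r_def[symmetric] h by (simp add: field_simps power2_eq_square)
qed

lemma cost_le_straight_line:
  fixes gV gW :: "real^'n \<Rightarrow> real^'n"
  assumes flow: "gradient_flow F \<rho>"
    and gV: "continuous_on UNIV gV" "\<And>x. norm (gV x) \<le> BV"
    and gW: "periodic gW" "K-lipschitz_on UNIV gW" "\<And>x. norm (gW x) \<le> BW"
    and "t > 0" and "h > 0" and "int_vec k"
  shows "cost gV gW \<rho> x y t h \<le> (norm (x - y - k) / (2 * sqrt h) + (1/2) * sqrt h * (BV + BW))\<^sup>2"
proof -
  define v where "v = (1 / h) *\<^sub>R (y + k - x)"
  define \<gamma> where "\<gamma> = (\<lambda>s. x + (s - t) *\<^sub>R v)"
  define L where "L = (\<lambda>s. lagrangian gV gW \<rho> v (\<gamma> s) s)"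
  have "L integrable_on {t..t + h}"
    unfolding L_def \<gamma>_def using flow \<open>t > 0\<close> gV(1) gW(1,2)
    by (intro integrable_lagrangian_along_curve) (auto intro!: continuous_intros)
  moreover have "\<gamma> (t + h) - y = k" using \<open>h > 0\<close> by (simp add: \<gamma>_def v_def algebra_simps)
  ultimately have "cost gV gW \<rho> x y t h \<le> integral {t..t + h} L"
    unfolding L_def \<gamma>_def using \<open>int_vec k\<close> AC2_curve_linear by (intro cost_le_action) auto
  also have "\<dots> \<le> integral {t..t + h} (\<lambda>_. (1/4) * (norm v + BV + BW)\<^sup>2)"
  proof (rule integral_le[OF \<open>L integrable_on {t..t + h}\<close>])
    have meas: "gW \<in> borel_measurable borel"
      using gW(2) by (intro borel_measurable_continuous_onI lipschitz_on_continuous_on)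
    fix s assume "s \<in> {t..t + h}"
    then have "\<rho> s \<in> prob_torus"
      using flow \<open>t > 0\<close> by (simp add: gradient_flow_def)
    then show "L s \<le> (1/4) * (norm v + BV + BW)\<^sup>2"
      unfolding L_def using gV(2) conv_grad_norm_le[OF _ meas gW(3)] by (blast intro: lagrangian_le)
  qed (rule integrable_const_ivl)
  also have "norm v = norm (x - y - k) / h"
    using \<open>h > 0\<close> norm_minus_commute[of "y + k" x] by (simp add: v_def diff_diff_eq)
  also have "integral {t..t + h} (\<lambda>_. (1/4) * (norm (x - y - k) / h + BV + BW)\<^sup>2)
      = h * ((1/4) * (norm (x - y - k) / h + BV + BW)\<^sup>2)"
    using \<open>h > 0\<close> by simp
  also have "\<dots> = (norm (x - y - k) / (2 * sqrt h) + (1/2) * sqrt h * (BV + BW))\<^sup>2"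
    using \<open>h > 0\<close> by (simp only: straight_line_action_eq add.assoc)
  finally show ?thesis .
qed

theorem mainTheorem9:
  fixes V W :: "real^'n \<Rightarrow> real" and gradV gradW :: "real^'n \<Rightarrow> real^'n"
    and \<rho> :: "real \<Rightarrow> (real^'n) measure"
    and x y :: "real^'n" and t h :: real
  assumes "periodic V" and "periodic W"
    and "C21 V gradV" and "C21 W gradW"
    and "granular_gradient_flow V W \<rho>"
    and "t > 0" and "h > 0"
  shows "cost gradV gradW \<rho> x y t h
           \<le> (torus_dist x y / (2 * sqrt h) + (1/2) * sqrt h * (sup_norm gradV + sup_norm gradW))\<^sup>2"
proof -
  obtain k where "int_vec k" and k: "torus_dist x y = norm (x - y - k)"
    by (rule torus_dist_attained)
  obtain K where "K-lipschitz_on UNIV gradW"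
    using C21_periodic_gradient_lipschitz[OF assms(2,4)] .
  note gradV = C21_periodic_gradient[OF assms(1,3)]
  note gradW = C21_periodic_gradient[OF assms(2,4)]
  from assms(5) have "gradient_flow (free_energy V W) \<rho>"
    by (simp add: granular_gradient_flow_def)
  then show ?thesis
    unfolding k using gradV(1,3) gradW(2) \<open>K-lipschitz_on UNIV gradW\<close> gradW(3)
      assms(6,7) \<open>int_vec k\<close> by (rule cost_le_straight_line)
qed

end
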